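(* Let $f:[0,1]^n\to[0,1]$ be implementable by a Bernoulli factory, and suppose that for some open face $F_{A,S,B}$ of the hypercube we have $f|_{F_{A,S,B}}\not\equiv 1$. Then there exist an integer $m\ge 0$ and a constant $c>0$ such that $1-f(p)\ge c\left((1-p)^A\, p^S(1-p)^S\, p^B\right)^m$ for all $p\in[0,1]^n$.
   Context: A (multiparameter) Bernoulli factory with input $(p_1,\dots,p_n)$ is a (possibly infinite) rooted binary tree in which every node has either $2$ children or $0$ children (leaf). Each internal node is labelled either by an index $i\in[n]$ or by a constant $c\in(0,1)$; each leaf is labelled $0$ or $1$. To execute it with coins $p\in[0,1]^n$, start at the root; at a node labelled $i$ draw a fresh independent Bernoulli($p_i$) sample, at a node labelled $c$ a fresh independent Bernoulli($c$) sample; move to the child corresponding to the outcome; upon reaching a leaf output its label. $f$ is implementable by a Bernoulli factory if there is such a tree which, for every $p\in[0,1]^n$, reaches a leaf almost surely and outputs $1$ with probability exactly $f(p)$. For a partition $[n]=A\sqcup S\sqcup B$, the open face is $F_{A,S,B}=\{p\in[0,1]^n: p_i=0\ (i\in A),\ 0<p_i<1\ (i\in S),\ p_i=1\ (i\in B)\}$. For $T\subseteq[n]$, $p^T=\prod_{i\in T}p_i$, $(1-p)^T=\prod_{i\in T}(1-p_i)$. $f|_X\equiv 1$ means $f$ equals $1$ on all of $X$. *)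

theory Defs
  imports "HOL-Analysis.Analysis"
begin

text \<open>Node labels of a Bernoulli factory tree over coin index type 'n.
  True = outcome 1 (go to the "1" child), False = outcome 0.\<close>
datatype 'n bf_label = Idx 'n | Cst real | Leaf bool

text \<open>A (possibly infinite) full binary tree is a labelling of all finite
  paths (bool lists from the root); the actual nodes are the paths all of whose
  proper prefixes are internal nodes.  Children of node xs are xs@[False], xs@[True].\<close>
type_synonym 'n bf_tree = "bool list \<Rightarrow> 'n bf_label"

definition is_internal :: "'n bf_label \<Rightarrow> bool" where
  "is_internal l \<longleftrightarrow> (case l of Leaf _ \<Rightarrow> False | _ \<Rightarrow> True)"

definition bf_node :: "'n bf_tree \<Rightarrow> bool list \<Rightarrow> bool" where
  "bf_node T xs \<longleftrightarrow> (\<forall>k<length xs. is_internal (T (take k xs)))"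

fun bf_edge :: "'n bf_label \<Rightarrow> ('n \<Rightarrow> real) \<Rightarrow> bool \<Rightarrow> real" where
  "bf_edge (Idx i) p b = (if b then p i else 1 - p i)"
| "bf_edge (Cst c) p b = (if b then c else 1 - c)"
| "bf_edge (Leaf _) p b = 0"

definition bf_reach :: "'n bf_tree \<Rightarrow> ('n \<Rightarrow> real) \<Rightarrow> bool list \<Rightarrow> real" where
  "bf_reach T p xs = (\<Prod>k<length xs. bf_edge (T (take k xs)) p (xs ! k))"

definition bf_wf :: "'n bf_tree \<Rightarrow> bool" where
  "bf_wf T \<longleftrightarrow> (\<forall>xs c. bf_node T xs \<and> T xs = Cst c \<longrightarrow> 0 < c \<and> c < 1)"

definition cube :: "('n \<Rightarrow> real) set" where
  "cube = {p. \<forall>i. 0 \<le> p i \<and> p i \<le> 1}"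

text \<open>T implements f: for every p in the cube, a leaf is reached almost surely
  (the leaf-reaching probabilities sum to 1) and output 1 occurs with probability f p.\<close>
definition bf_implements :: "'n bf_tree \<Rightarrow> (('n \<Rightarrow> real) \<Rightarrow> real) \<Rightarrow> bool" where
  "bf_implements T f \<longleftrightarrow> bf_wf T \<and>
     (\<forall>p\<in>cube.
        (bf_reach T p has_sum 1) {xs. bf_node T xs \<and> \<not> is_internal (T xs)} \<and>
        (bf_reach T p has_sum f p) {xs. bf_node T xs \<and> T xs = Leaf True})"

definition bf_implementable :: "(('n::finite \<Rightarrow> real) \<Rightarrow> real) \<Rightarrow> bool" where
  "bf_implementable f \<longleftrightarrow> (\<exists>T. bf_implements T f)"

definition open_face :: "'n set \<Rightarrow> 'n set \<Rightarrow> 'n set \<Rightarrow> ('n \<Rightarrow> real) set" where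
  "open_face A S B = {p. (\<forall>i\<in>A. p i = 0) \<and> (\<forall>i\<in>S. 0 < p i \<and> p i < 1) \<and> (\<forall>i\<in>B. p i = 1)}"

end

theory Submission
  imports Defs
begin

text \<open>Choose p0 in the face with f p0 \<noteq> 1. The 0-leaves carry total mass 1 - f p0 > 0 at p0,
  so some 0-leaf is reached with positive probability at p0. Every coin edge on its path then has
  positive probability at p0, which forces heads only for coins in S \<union> B and tails only for coins
  in A \<union> S; hence at any p each coin edge has probability at least the face monomial of p, while
  constant edges contribute fixed positive factors. The reach probability of that leaf, and with
  it 1 - f p, is therefore at least a constant times the face monomial to the power of the depth.\<close>

definition face_monomial :: "'n set \<Rightarrow> 'n set \<Rightarrow> 'n set \<Rightarrow> ('n \<Rightarrow> real) \<Rightarrow> real" where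
  "face_monomial A S B p =
     (\<Prod>i\<in>A. 1 - p i) * (\<Prod>i\<in>S. p i) * (\<Prod>i\<in>S. 1 - p i) * (\<Prod>i\<in>B. p i)"

lemma prod_le_factor:
  fixes g :: "'a \<Rightarrow> real"
  assumes "finite I" "i \<in> I" "\<And>j. j \<in> I \<Longrightarrow> 0 \<le> g j \<and> g j \<le> 1"
  shows "prod g I \<le> g i"
proof -
  have "prod g I = g i * prod g (I - {i})"
    using assms by (simp add: prod.remove)
  moreover have "prod g (I - {i}) \<le> 1"
    by (rule prod_le_1) (use assms in auto)
  ultimately show ?thesis
    using assms by (simp add: mult_left_le)
qed

lemma mult_le_factors_unit_interval:
  fixes a b c d :: real
  assumes "0 \<le> a" "a \<le> 1" "0 \<le> b" "b \<le> 1" "0 \<le> c" "c \<le> 1" "0 \<le> d" "d \<le> 1"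
  shows "a * b * c * d \<le> a" "a * b * c * d \<le> b" "a * b * c * d \<le> c" "a * b * c * d \<le> d"
proof -
  have "a * b * c * d = a * (b * c * d)" "a * b * c * d = b * (a * c * d)"
    "a * b * c * d = c * (a * b * d)" "a * b * c * d = d * (a * b * c)"
    by (simp_all add: ac_simps)
  moreover have "0 \<le> b * c * d" "b * c * d \<le> 1" "0 \<le> a * c * d" "a * c * d \<le> 1"
    "0 \<le> a * b * d" "a * b * d \<le> 1" "0 \<le> a * b * c" "a * b * c \<le> 1"
    using assms by (auto intro: mult_le_one)
  ultimately show "a * b * c * d \<le> a" "a * b * c * d \<le> b" "a * b * c * d \<le> c"
    "a * b * c * d \<le> d"
    using assms by (metis mult_right_le_one_le)+
qed

lemma cube_coord_bounds: "p \<in> cube \<Longrightarrow> 0 \<le> p i \<and> p i \<le> 1"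
  unfolding cube_def by auto

lemma open_face_subset_cube:
  assumes "A \<union> S \<union> B = UNIV"
  shows "open_face A S B \<subseteq> cube"
proof
  fix p assume p: "p \<in> open_face A S B"
  have "0 \<le> p i \<and> p i \<le> 1" for i
    using p assms unfolding open_face_def by (cases "i \<in> A"; cases "i \<in> S") force+
  then show "p \<in> cube" unfolding cube_def by blast
qed

lemma face_monomial_bounds:
  fixes p :: "'n::finite \<Rightarrow> real"
  assumes "p \<in> cube"
  shows face_monomial_nonneg: "0 \<le> face_monomial A S B p"
    and face_monomial_le_one: "face_monomial A S B p \<le> 1"
    and face_monomial_le_coord: "i \<in> S \<union> B \<Longrightarrow> face_monomial A S B p \<le> p i"
    and face_monomial_le_one_minus_coord: "i \<in> A \<union> S \<Longrightarrow> face_monomial A S B p \<le> 1 - p i"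
proof -
  define a b c d where "a = (\<Prod>i\<in>A. 1 - p i)" and "b = (\<Prod>i\<in>S. p i)"
    and "c = (\<Prod>i\<in>S. 1 - p i)" and "d = (\<Prod>i\<in>B. p i)"
  have unit: "\<And>j. 0 \<le> p j \<and> p j \<le> 1" "\<And>j. 0 \<le> 1 - p j \<and> 1 - p j \<le> 1"
    using cube_coord_bounds[OF assms] by auto
  have "0 \<le> a \<and> a \<le> 1" "0 \<le> b \<and> b \<le> 1" "0 \<le> c \<and> c \<le> 1" "0 \<le> d \<and> d \<le> 1"
    unfolding a_def b_def c_def d_def using unit by (auto intro: prod_nonneg prod_le_1)
  then have Q: "0 \<le> a * b * c * d" "a * b * c * d \<le> a" "a * b * c * d \<le> b"
      "a * b * c * d \<le> c" "a * b * c * d \<le> d"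
    by (auto intro: mult_nonneg_nonneg mult_le_factors_unit_interval)
  have eq: "face_monomial A S B p = a * b * c * d"
    unfolding face_monomial_def a_def b_def c_def d_def ..
  show "0 \<le> face_monomial A S B p" "face_monomial A S B p \<le> 1"
    using Q \<open>0 \<le> d \<and> d \<le> 1\<close> unfolding eq by linarith+
  show "face_monomial A S B p \<le> p i" if "i \<in> S \<union> B"
  proof -
    have "b \<le> p i" if "i \<in> S" unfolding b_def using that unit by (intro prod_le_factor) auto
    moreover have "d \<le> p i" if "i \<in> B" unfolding d_def using that unit by (intro prod_le_factor) auto
    ultimately show ?thesis using Q \<open>i \<in> S \<union> B\<close> unfolding eq by force
  qed
  show "face_monomial A S B p \<le> 1 - p i" if "i \<in> A \<union> S"
  proof -
    have "a \<le> 1 - p i" if "i \<in> A" unfolding a_def using that unit by (intro prod_le_factor) auto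
    moreover have "c \<le> 1 - p i" if "i \<in> S" unfolding c_def using that unit by (intro prod_le_factor) auto
    ultimately show ?thesis using Q \<open>i \<in> A \<union> S\<close> unfolding eq by force
  qed
qed

lemma not_is_internal_iff: "\<not> is_internal l \<longleftrightarrow> (\<exists>b. l = Leaf b)"
  unfolding is_internal_def by (cases l) auto

lemma bf_node_prefix_internal:
  assumes "bf_node T xs" "k < length xs"
  shows "is_internal (T (take k xs))"
  using assms unfolding bf_node_def by auto

lemma bf_wf_Cst_on_path:
  assumes "bf_wf T" "bf_node T xs" "k < length xs" "T (take k xs) = Cst c"
  shows "0 < c \<and> c < 1"
proof -
  have "bf_node T (take k xs)"
    using assms(2,3) unfolding bf_node_def by (auto simp: min_def)
  then show ?thesis
    using assms(1,4) unfolding bf_wf_def by blast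
qed

lemma bf_edge_nonneg:
  assumes "p \<in> cube" "\<And>c. l = Cst c \<Longrightarrow> 0 < c \<and> c < 1"
  shows "0 \<le> bf_edge l p b"
  using assms cube_coord_bounds[OF assms(1)] by (cases l) fastforce+

lemma bf_reach_nonneg:
  assumes "bf_wf T" "p \<in> cube" "bf_node T xs"
  shows "0 \<le> bf_reach T p xs"
  unfolding bf_reach_def
  using assms bf_wf_Cst_on_path by (intro prod_nonneg bf_edge_nonneg) auto

lemma bf_implements_has_sum_Leaf_False:
  assumes "bf_implements T f" "p \<in> cube"
  shows "(bf_reach T p has_sum (1 - f p)) {xs. bf_node T xs \<and> T xs = Leaf False}"
proof -
  let ?L = "{xs. bf_node T xs \<and> \<not> is_internal (T xs)}"
  let ?L1 = "{xs. bf_node T xs \<and> T xs = Leaf True}"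
  have "(bf_reach T p has_sum 1 - f p) (?L - ?L1)"
    using assms unfolding bf_implements_def
    by (intro has_sum_Diff) (auto simp: not_is_internal_iff)
  also have "?L - ?L1 = {xs. bf_node T xs \<and> T xs = Leaf False}"
    by (auto simp: not_is_internal_iff)
  finally show ?thesis .
qed

lemma bf_reach_Leaf_False_le:
  assumes "bf_implements T f" "p \<in> cube" "bf_node T xs" "T xs = Leaf False"
  shows "bf_reach T p xs \<le> 1 - f p"
proof (rule has_sum_mono_neutral[OF _ bf_implements_has_sum_Leaf_False[OF assms(1,2)]])
  show "(bf_reach T p has_sum bf_reach T p xs) {xs}"
    by (rule has_sum_finiteI) auto
  show "0 \<le> bf_reach T p ys" if "ys \<in> {ys. bf_node T ys \<and> T ys = Leaf False} - {xs}" for ys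
    using that assms(1,2) bf_reach_nonneg unfolding bf_implements_def by blast
qed (use assms in auto)

lemma bf_implements_Leaf_False_reached:
  assumes "bf_implements T f" "p \<in> cube" "f p \<noteq> 1"
  obtains xs where "bf_node T xs" "T xs = Leaf False" "bf_reach T p xs \<noteq> 0"
proof (rule ccontr)
  assume "\<not> thesis"
  with that have "(bf_reach T p has_sum 0) {xs. bf_node T xs \<and> T xs = Leaf False}"
    by (intro has_sum_0) blast
  with bf_implements_has_sum_Leaf_False[OF assms(1,2)] assms(3) show False
    using has_sum_unique by fastforce
qed

lemma bf_edge_ge_face_monomial:
  fixes p p0 :: "'n::finite \<Rightarrow> real"
  assumes "A \<union> S \<union> B = UNIV" "p0 \<in> open_face A S B" "bf_edge (Idx i) p0 b \<noteq> 0" "p \<in> cube"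
  shows "face_monomial A S B p \<le> bf_edge (Idx i) p b"
proof (cases b)
  case True
  then have "i \<in> S \<union> B"
    using assms(1-3) unfolding open_face_def by auto
  then show ?thesis
    using True face_monomial_le_coord[OF assms(4)] by simp
next
  case False
  then have "i \<in> A \<union> S"
    using assms(1-3) unfolding open_face_def by auto
  then show ?thesis
    using False face_monomial_le_one_minus_coord[OF assms(4)] by simp
qed

lemma bf_edge_lower_bound:
  fixes p0 :: "'n::finite \<Rightarrow> real"
  assumes "is_internal l" "\<And>c. l = Cst c \<Longrightarrow> 0 < c \<and> c < 1"
    and "A \<union> S \<union> B = UNIV" "p0 \<in> open_face A S B" "bf_edge l p0 b \<noteq> 0"
  obtains d where "0 < d" "\<And>p. p \<in> cube \<Longrightarrow> d * face_monomial A S B p \<le> bf_edge l p b"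
proof (cases l)
  case (Idx i)
  then show ?thesis
    using that[of 1] bf_edge_ge_face_monomial[OF assms(3,4)] assms(5) by simp
next
  case (Cst c)
  let ?d = "bf_edge l p0 b"
  have "0 < ?d"
    using assms(2,5) Cst by auto
  moreover have "?d * face_monomial A S B p \<le> bf_edge l p b" if "p \<in> cube" for p
    using \<open>0 < ?d\<close> face_monomial_le_one[OF that] Cst by (simp add: mult_left_le)
  ultimately show ?thesis
    using that by blast
next
  case (Leaf x)
  then show ?thesis
    using assms(1) unfolding is_internal_def by simp
qed

lemma bf_reach_ge_face_monomial_power:
  fixes p0 :: "'n::finite \<Rightarrow> real"
  assumes "bf_wf T" "bf_node T xs" "A \<union> S \<union> B = UNIV" "p0 \<in> open_face A S B"
    and "bf_reach T p0 xs \<noteq> 0"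
  obtains C where "0 < C"
    "\<And>p. p \<in> cube \<Longrightarrow> C * face_monomial A S B p ^ length xs \<le> bf_reach T p xs"
proof -
  let ?n = "length xs"
  let ?e = "\<lambda>p k. bf_edge (T (take k xs)) p (xs ! k)"
  have "\<exists>d>0. \<forall>p\<in>cube. d * face_monomial A S B p \<le> ?e p k" if "k < ?n" for k
  proof -
    have "?e p0 k \<noteq> 0"
      using assms(5) that unfolding bf_reach_def by auto
    then show ?thesis
      using bf_edge_lower_bound[OF bf_node_prefix_internal[OF assms(2) that] _ assms(3,4)]
        bf_wf_Cst_on_path[OF assms(1,2) that] by metis
  qed
  then obtain d where d: "\<And>k. k < ?n \<Longrightarrow> 0 < d k"
    "\<And>k p. k < ?n \<Longrightarrow> p \<in> cube \<Longrightarrow> d k * face_monomial A S B p \<le> ?e p k"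
    by metis
  show ?thesis
  proof (rule that[of "\<Prod>k<?n. d k"])
    show "0 < (\<Prod>k<?n. d k)"
      using d(1) by (intro prod_pos) auto
    fix p :: "'n \<Rightarrow> real" assume p: "p \<in> cube"
    have "(\<Prod>k<?n. d k) * face_monomial A S B p ^ ?n = (\<Prod>k<?n. d k * face_monomial A S B p)"
      by (simp add: prod.distrib)
    also have "\<dots> \<le> (\<Prod>k<?n. ?e p k)"
      using d(1)[THEN less_imp_le] d(2) p face_monomial_nonneg[OF p]
      by (intro prod_mono) auto
    also have "\<dots> = bf_reach T p xs"
      unfolding bf_reach_def ..
    finally show "(\<Prod>k<?n. d k) * face_monomial A S B p ^ ?n \<le> bf_reach T p xs" .
  qed
qed

theorem lemma3:
  fixes f :: "('n::finite \<Rightarrow> real) \<Rightarrow> real" and A S B :: "'n set"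
  assumes "bf_implementable f"
    and "A \<inter> S = {}" and "A \<inter> B = {}" and "S \<inter> B = {}" and "A \<union> S \<union> B = UNIV"
    and "\<exists>p\<in>open_face A S B. f p \<noteq> 1"
  shows "\<exists>(m::nat) (c::real). c > 0 \<and> (\<forall>p\<in>cube.
           1 - f p \<ge> c * ((\<Prod>i\<in>A. 1 - p i) * (\<Prod>i\<in>S. p i) * (\<Prod>i\<in>S. 1 - p i)
                           * (\<Prod>i\<in>B. p i)) ^ m)"
proof -
  obtain T where T: "bf_implements T f"
    using assms(1) unfolding bf_implementable_def by blast
  obtain p0 where p0: "p0 \<in> open_face A S B" "f p0 \<noteq> 1"
    using assms(6) by blast
  have "p0 \<in> cube"
    using open_face_subset_cube[OF assms(5)] p0(1) by blast
  then obtain xs where xs: "bf_node T xs" "T xs = Leaf False" "bf_reach T p0 xs \<noteq> 0"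
    using bf_implements_Leaf_False_reached[OF T _ p0(2)] by blast
  have "bf_wf T"
    using T unfolding bf_implements_def by blast
  then obtain C where "0 < C"
    "\<And>p. p \<in> cube \<Longrightarrow> C * face_monomial A S B p ^ length xs \<le> bf_reach T p xs"
    using bf_reach_ge_face_monomial_power[OF _ xs(1) assms(5) p0(1) xs(3)] by blast
  then have "\<forall>p\<in>cube. C * face_monomial A S B p ^ length xs \<le> 1 - f p"
    using bf_reach_Leaf_False_le[OF T _ xs(1,2)] by fastforce
  then show ?thesis
    using \<open>0 < C\<close> unfolding face_monomial_def by blast
qed

end
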